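(* Let $m\ge1$ be an integer, let $G_0$ be a regular conditional distribution of $X_0$ given $\{X_i:0<|i|\le m\}$ (also written as a distribution function $G_0(y)$), and suppose there exist a set $A\in\mathcal F$ with $P(A)>0$ and real numbers $\varepsilon\in(0,1/2)$, $a\le\xi_p\le b$ such that for all $\omega\in A$, $G_0((a-\varepsilon,a])>\varepsilon$ and $G_0((b,b+\varepsilon])>\varepsilon$. Then $P(G_0(\xi_p)=1)<p$.
   Context: $\{X_i\}_{i\in\mathbb{Z}}$ is a strictly stationary real sequence on $(\Omega,\mathcal F,P)$ with marginal distribution function $F$; $p\in(0,1)$, $\xi_p=\inf\{x:F(x)\ge p\}$, and $F(\xi_p)=p$ (e.g. $F$ continuous at $\xi_p$). *)

theory Defs
  imports "HOL-Probability.Probability"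
begin

definition strictly_stationary :: "'a measure \<Rightarrow> (int \<Rightarrow> 'a \<Rightarrow> real) \<Rightarrow> bool" where
  "strictly_stationary M X \<longleftrightarrow>
     (\<forall>J k. finite J \<longrightarrow>
        distr M (PiM J (\<lambda>_. borel)) (\<lambda>\<omega>. \<lambda>i\<in>J. X (i + k) \<omega>) =
        distr M (PiM J (\<lambda>_. borel)) (\<lambda>\<omega>. \<lambda>i\<in>J. X i \<omega>))"

definition marg_cdf :: "'a measure \<Rightarrow> (int \<Rightarrow> 'a \<Rightarrow> real) \<Rightarrow> real \<Rightarrow> real" where
  "marg_cdf M X x = measure M {\<omega> \<in> space M. X 0 \<omega> \<le> x}"

definition quantile :: "(real \<Rightarrow> real) \<Rightarrow> real \<Rightarrow> real" where
  "quantile F p = Inf {x. F x \<ge> p}"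

definition gen_sigma :: "'a measure \<Rightarrow> (int \<Rightarrow> 'a \<Rightarrow> real) \<Rightarrow> int set \<Rightarrow> 'a measure" where
  "gen_sigma M X J = vimage_algebra (space M) (\<lambda>\<omega>. \<lambda>i\<in>J. X i \<omega>) (PiM J (\<lambda>_. borel))"

definition reg_cond_dist :: "'a measure \<Rightarrow> ('a \<Rightarrow> real) \<Rightarrow> 'a measure \<Rightarrow> ('a \<Rightarrow> real measure) \<Rightarrow> bool" where
  "reg_cond_dist M Y N K \<longleftrightarrow>
     (\<forall>\<omega>\<in>space M. prob_space (K \<omega>) \<and> sets (K \<omega>) = sets borel) \<and>
     (\<forall>B\<in>sets borel.
        (\<lambda>\<omega>. measure (K \<omega>) B) \<in> borel_measurable N \<and>
        (\<forall>C\<in>sets N. (LINT \<omega>:C|M. measure (K \<omega>) B) = measure M (C \<inter> {\<omega>\<in>space M. Y \<omega> \<in> B})))"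

end

theory Submission
  imports Defs
begin

(* Write g(\<omega>) = K \<omega> (-\<infinity>, \<xi>_p] for the conditional distribution
   function at the quantile.  Since K is a regular conditional distribution of
   X_0 and the conditioning sigma-algebra is a sub-sigma-algebra of M, g is a
   [0,1]-valued random variable with E g = P(X_0 \<le> \<xi>_p) = F(\<xi>_p) = p.
   On A the conditional law puts mass > \<epsilon> on (a-\<epsilon>, a] \<subseteq> (-\<infinity>, \<xi>_p] and mass
   > \<epsilon> on (b, b+\<epsilon>], which is disjoint from (-\<infinity>, \<xi>_p]; hence \<epsilon> < g < 1 on A.
   Pointwise 1_{g=1} + \<epsilon> 1_A \<le> g, so P(g = 1) + \<epsilon> P(A) \<le> E g = p, and the
   claim follows from \<epsilon> P(A) > 0.
   The file first proves the measurability facts about gen_sigma and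
   reg_cond_dist, then the bound for a single probability measure, then the
   abstract inequality for [0,1]-valued random variables, and finally the
   theorem. *)

lemma subalgebra_gen_sigma:
  assumes "\<And>i. i \<in> J \<Longrightarrow> X i \<in> borel_measurable M"
  shows "subalgebra M (gen_sigma M X J)"
proof -
  have "(\<lambda>\<omega>. \<lambda>i\<in>J. X i \<omega>) \<in> measurable M (PiM J (\<lambda>_. borel))"
    using assms by (intro measurable_restrict) auto
  then have "sets (gen_sigma M X J) \<subseteq> sets M"
    unfolding gen_sigma_def sets_vimage_algebra
    by (intro sets.sigma_sets_subset) (use measurable_sets in blast)
  then show ?thesis
    unfolding subalgebra_def by (simp add: gen_sigma_def)
qed

lemma reg_cond_dist_integral:
  assumes sub: "subalgebra M N" and K: "reg_cond_dist M Y N K" and B: "B \<in> sets borel"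
  shows "(\<lambda>\<omega>. measure (K \<omega>) B) \<in> borel_measurable M"
    and "integral\<^sup>L M (\<lambda>\<omega>. measure (K \<omega>) B) = measure M {\<omega>\<in>space M. Y \<omega> \<in> B}"
proof -
  have "(\<lambda>\<omega>. measure (K \<omega>) B) \<in> borel_measurable N"
    using K B unfolding reg_cond_dist_def by blast
  then show "(\<lambda>\<omega>. measure (K \<omega>) B) \<in> borel_measurable M"
    by (rule measurable_from_subalg[OF sub])
  have "space M \<in> sets N"
    using sub unfolding subalgebra_def by (metis sets.top)
  then have "(LINT \<omega>:space M|M. measure (K \<omega>) B) = measure M (space M \<inter> {\<omega>\<in>space M. Y \<omega> \<in> B})"
    using K B unfolding reg_cond_dist_def by blast
  moreover have "(LINT \<omega>:space M|M. measure (K \<omega>) B) = integral\<^sup>L M (\<lambda>\<omega>. measure (K \<omega>) B)"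
    by (simp add: set_lebesgue_integral_def indicator_def cong: Bochner_Integration.integral_cong)
  ultimately show "integral\<^sup>L M (\<lambda>\<omega>. measure (K \<omega>) B) = measure M {\<omega>\<in>space M. Y \<omega> \<in> B}"
    by (simp add: Int_absorb1)
qed

lemma cdf_strictly_between:
  assumes "prob_space Q" and sQ: "sets Q = sets borel"
    and "a \<le> \<xi>" and "\<xi> \<le> b"
    and left: "measure Q {a - \<epsilon><..a} > \<epsilon>" and right: "measure Q {b<..b + \<epsilon>} > \<epsilon>"
    and "0 < \<epsilon>"
  shows "\<epsilon> < measure Q {..\<xi>} \<and> measure Q {..\<xi>} < 1"
proof -
  interpret Q: prob_space Q by fact
  have "measure Q {a - \<epsilon><..a} \<le> measure Q {..\<xi>}"
    using \<open>a \<le> \<xi>\<close> by (intro Q.finite_measure_mono) (auto simp: sQ)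
  moreover have "measure Q {..\<xi>} + measure Q {b<..b + \<epsilon>} = measure Q ({..\<xi>} \<union> {b<..b + \<epsilon>})"
    using \<open>\<xi> \<le> b\<close> by (intro Q.finite_measure_Union[symmetric]) (auto simp: sQ)
  moreover have "measure Q ({..\<xi>} \<union> {b<..b + \<epsilon>}) \<le> 1"
    by (rule Q.prob_le_1)
  ultimately show ?thesis
    using left right \<open>0 < \<epsilon>\<close> by linarith
qed

lemma (in prob_space) prob_eq_one_le_expectation:
  assumes gM: "g \<in> borel_measurable M"
    and g01: "\<And>\<omega>. \<omega> \<in> space M \<Longrightarrow> 0 \<le> g \<omega> \<and> g \<omega> \<le> 1"
    and A: "A \<in> events" and onA: "\<And>\<omega>. \<omega> \<in> A \<Longrightarrow> \<epsilon> < g \<omega> \<and> g \<omega> < 1"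
  shows "prob {\<omega>\<in>space M. g \<omega> = 1} + \<epsilon> * prob A \<le> expectation g"
proof -
  define S where "S = {\<omega>\<in>space M. g \<omega> = 1}"
  have S: "S \<in> events"
    unfolding S_def using gM by measurable
  have pointwise: "indicator S \<omega> + \<epsilon> * indicator A \<omega> \<le> g \<omega>" if "\<omega> \<in> space M" for \<omega>
  proof (cases "\<omega> \<in> A")
    case True
    then have "\<omega> \<notin> S" using onA unfolding S_def by fastforce
    then show ?thesis using True onA[OF True] by (simp add: indicator_def)
  next
    case False
    then show ?thesis using g01[OF that] by (auto simp: indicator_def S_def)
  qed
  have intS: "integrable M (indicator S :: 'a \<Rightarrow> real)"
    using S by (intro integrable_real_indicator) (auto simp: emeasure_finite less_top[symmetric])
  have intA: "integrable M (indicator A :: 'a \<Rightarrow> real)"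
    using A by (intro integrable_real_indicator) (auto simp: emeasure_finite less_top[symmetric])
  have "integrable M g"
    by (rule integrable_const_bound[where B=1]) (use g01 gM in auto)
  then have "expectation (\<lambda>\<omega>. indicator S \<omega> + \<epsilon> * indicator A \<omega>) \<le> expectation g"
    by (intro integral_mono) (use intS intA pointwise in auto)
  moreover have "expectation (\<lambda>\<omega>. indicator S \<omega> + \<epsilon> * indicator A \<omega>) = prob S + \<epsilon> * prob A"
    using intS intA S A by simp
  ultimately show ?thesis unfolding S_def by simp
qed

theorem mainTheorem5:
  fixes M :: "'a measure" and X :: "int \<Rightarrow> 'a \<Rightarrow> real" and p :: real
    and m :: nat and K :: "'a \<Rightarrow> real measure" and A :: "'a set"
    and \<epsilon> a b :: real
  assumes "prob_space M"
    and "\<And>i. X i \<in> borel_measurable M"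
    and "strictly_stationary M X"
    and "0 < p" and "p < 1"
    and "marg_cdf M X (quantile (marg_cdf M X) p) = p"
    and "m \<ge> 1"
    and "reg_cond_dist M (X 0) (gen_sigma M X {i. 0 < \<bar>i\<bar> \<and> \<bar>i\<bar> \<le> int m}) K"
    and "A \<in> sets M" and "measure M A > 0"
    and "0 < \<epsilon>" and "\<epsilon> < 1/2"
    and "a \<le> quantile (marg_cdf M X) p" and "quantile (marg_cdf M X) p \<le> b"
    and "\<forall>\<omega>\<in>A. measure (K \<omega>) {a - \<epsilon><..a} > \<epsilon> \<and> measure (K \<omega>) {b<..b + \<epsilon>} > \<epsilon>"
  shows "measure M {\<omega>\<in>space M. measure (K \<omega>) {..quantile (marg_cdf M X) p} = 1} < p"
proof -
  interpret prob_space M by fact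
  define \<xi> where "\<xi> = quantile (marg_cdf M X) p"
  define g where "g = (\<lambda>\<omega>. measure (K \<omega>) {..\<xi>})"
  have sub: "subalgebra M (gen_sigma M X {i. 0 < \<bar>i\<bar> \<and> \<bar>i\<bar> \<le> int m})"
    using assms(2) by (rule subalgebra_gen_sigma)
  have kernel: "prob_space (K \<omega>) \<and> sets (K \<omega>) = sets borel" if "\<omega> \<in> space M" for \<omega>
    using assms(8) that unfolding reg_cond_dist_def by blast
  have gM: "g \<in> borel_measurable M" and Eg: "expectation g = p"
    using reg_cond_dist_integral[OF sub assms(8), of "{..\<xi>}"] assms(6)
    by (simp_all add: g_def marg_cdf_def \<xi>_def)
  have g01: "0 \<le> g \<omega> \<and> g \<omega> \<le> 1" if "\<omega> \<in> space M" for \<omega>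
    using kernel[OF that] by (simp add: g_def prob_space.prob_le_1)
  have onA: "\<epsilon> < g \<omega> \<and> g \<omega> < 1" if "\<omega> \<in> A" for \<omega>
    using that sets.sets_into_space[OF assms(9)] assms(11,13,14,15) kernel
    unfolding g_def \<xi>_def by (intro cdf_strictly_between) auto
  have "prob {\<omega>\<in>space M. g \<omega> = 1} + \<epsilon> * prob A \<le> p"
    using prob_eq_one_le_expectation[OF gM g01 assms(9) onA] Eg by simp
  moreover have "0 < \<epsilon> * prob A" using assms(10,11) by simp
  ultimately show ?thesis unfolding g_def \<xi>_def by linarith
qed

end
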